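(* For $n\ge2$ let $\mathcal{V}_n$ be the arc diagram with $\mathbf{Z}=\{Z_1,\dots,Z_n\}$, $\mathbf{a}=\{a_1,\dots,a_{2n-2}\}$, where $a_1\in Z_1$, $a_{2n-2}\in Z_n$, and $a_{2i},a_{2i+1}\in Z_{i+1}$ for $i=1,\dots,n-2$, with matching $M(a_{2i-1})=M(a_{2i})=i$ for $i=1,\dots,n-1$. Then the differential on the algebra $\mathcal{A}(\mathcal{V}_n)$ is identically zero.
   Context: Strands algebra $\mathcal{A}(n,k)$: the $\mathbb{F}_2$-vector space with basis triples $(S,T,\phi)$, $S,T\subset\{1,\dots,n\}$ of size $k$, $\phi\colon S\to T$ a bijection with $\phi(i)\ge i$; product $(S,T,\phi)(U,V,\psi)=(S,V,\psi\circ\phi)$ if $T=U$ and $\mathrm{inv}(\phi)+\mathrm{inv}(\psi)=\mathrm{inv}(\psi\circ\phi)$, else $0$ (inv = number of pairs $i<j$ with $\phi(i)>\phi(j)$); differential: sum over inversions of the generators obtained by swapping the two images, keeping those with inversion number one less. For an arc diagram $\mathcal{Z}=(\mathbf{Z},\mathbf{a},M)$ with $2k$ points, the extended strands algebra $\mathcal{A}(|Z_1|,\dots,|Z_l|)=\bigoplus\mathcal{A}(|Z_1|,k_1)\otimes\cdots\otimes\mathcal{A}(|Z_l|,k_l)$ ($|Z_j|$ = number of points of $\mathbf{a}$ on $Z_j$; strands stay within segments, differential by the Leibniz rule). For $s\subset\{1,\dots,k\}$ of size $i$: sections $S\subset M^{-1}(s)$ with $M|_S$ bijective onto $s$, $I(s)=\sum_S(S,S,\mathrm{id})$,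 $I=\sum_{|s|=i}I(s)$; for a bijection $\psi\colon S\to T$ ($S,T\subset\{1,\dots,2k\}$) with $\psi(x)>x$, $a_i(S,T,\psi)=\sum_U(S\cup U,T\cup U,\psi\cup\mathrm{id}_U)$ over $U$ disjoint from $S\cup T$ with $|S\cup U|=i$. $\mathcal{A}(\mathcal{Z},i)$ is the subalgebra of $\mathcal{A}(|Z_1|,\dots,|Z_l|)$ generated by the $I(s)$ and all $I\,a_i(S,T,\psi)\,I$, and $\mathcal{A}(\mathcal{Z})=\bigoplus_{i=0}^k\mathcal{A}(\mathcal{Z},i)$. *)

theory Defs
  imports Main
begin

text \<open>
  Points of an arc diagram with N points are numbered 1..N in the
  order a_1, ..., a_N; segments are consecutive blocks; seg p is the index of
  the segment containing point p; M p is the arc (1..k) containing point p.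

  A strands generator (S,T,phi) is represented by the graph of phi, a finite set
  of pairs (x, phi x); S = fst ` g, T = snd ` g.  An element of an
  F_2-vector space with a basis of generators is a finite set of generators
  (the set of basis elements with coefficient 1); addition is symmetric
  difference.
\<close>

type_synonym gen = "(nat \<times> nat) set"
type_synonym elt = "gen set"

definition sumF :: "('i \<Rightarrow> 'a set) \<Rightarrow> 'i set \<Rightarrow> 'a set" where
  "sumF f A = {c. odd (card {a\<in>A. c \<in> f a})}"

definition plusE :: "elt \<Rightarrow> elt \<Rightarrow> elt" where
  "plusE x y = (x - y) \<union> (y - x)"

definition partial_bij :: "nat \<Rightarrow> gen \<Rightarrow> bool" where
  "partial_bij N g \<longleftrightarrow> g \<subseteq> {1..N} \<times> {1..N}
     \<and> (\<forall>a b b'. (a,b) \<in> g \<longrightarrow> (a,b') \<in> g \<longrightarrow> b = b')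
     \<and> (\<forall>a a' b. (a,b) \<in> g \<longrightarrow> (a',b) \<in> g \<longrightarrow> a = a')"

definition is_gen :: "nat \<Rightarrow> (nat \<Rightarrow> nat) \<Rightarrow> gen \<Rightarrow> bool" where
  "is_gen N seg g \<longleftrightarrow> partial_bij N g \<and> (\<forall>(a,b)\<in>g. a \<le> b \<and> seg a = seg b)"

definition inv :: "gen \<Rightarrow> nat" where
  "inv g = card {(p,q). p \<in> g \<and> q \<in> g \<and> fst p < fst q \<and> snd p > snd q}"

definition mult_gen :: "gen \<Rightarrow> gen \<Rightarrow> elt" where
  "mult_gen g h = (if snd ` g = fst ` h \<and> inv g + inv h = inv (g O h)
                   then {g O h} else {})"

definition timesE :: "elt \<Rightarrow> elt \<Rightarrow> elt" where
  "timesE x y = sumF (\<lambda>(g,h). mult_gen g h) (x \<times> y)"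

definition swap :: "gen \<Rightarrow> nat \<times> nat \<Rightarrow> nat \<times> nat \<Rightarrow> gen" where
  "swap g p q = (g - {p,q}) \<union> {(fst p, snd q), (fst q, snd p)}"

definition dgen :: "gen \<Rightarrow> elt" where
  "dgen g = sumF (\<lambda>(p,q). if inv (swap g p q) + 1 = inv g then {swap g p q} else {})
              {(p,q). p \<in> g \<and> q \<in> g \<and> fst p < fst q \<and> snd p > snd q}"

definition diff :: "elt \<Rightarrow> elt" where
  "diff x = sumF dgen x"

definition Iset :: "nat \<Rightarrow> (nat \<Rightarrow> nat) \<Rightarrow> nat set \<Rightarrow> elt" where
  "Iset N M s = sumF (\<lambda>S. {Id_on S}) {S. S \<subseteq> {1..N} \<and> bij_betw M S s}"

definition Iall :: "nat \<Rightarrow> nat \<Rightarrow> (nat \<Rightarrow> nat) \<Rightarrow> nat \<Rightarrow> elt" where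
  "Iall N k M i = sumF (Iset N M) {s. s \<subseteq> {1..k} \<and> card s = i}"

definition a_elt :: "nat \<Rightarrow> nat \<Rightarrow> gen \<Rightarrow> elt" where
  "a_elt N i g = sumF (\<lambda>U. {g \<union> Id_on U})
      {U. U \<subseteq> {1..N} \<and> U \<inter> (fst ` g \<union> snd ` g) = {} \<and> card (fst ` g \<union> U) = i}"

text \<open>Admissible psi for a_i: bijection S -> T with psi x > x, strands within
  segments (so that a_i(S,T,psi) lies in the extended strands algebra).\<close>
definition a_ok :: "nat \<Rightarrow> (nat \<Rightarrow> nat) \<Rightarrow> gen \<Rightarrow> bool" where
  "a_ok N seg g \<longleftrightarrow> partial_bij N g \<and> (\<forall>(a,b)\<in>g. a < b \<and> seg a = seg b)"

definition gens_Zi :: "nat \<Rightarrow> nat \<Rightarrow> (nat \<Rightarrow> nat) \<Rightarrow> (nat \<Rightarrow> nat) \<Rightarrow> nat \<Rightarrow> elt set" where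
  "gens_Zi N k seg M i =
     {Iset N M s | s. s \<subseteq> {1..k} \<and> card s = i}
     \<union> {timesE (Iall N k M i) (timesE (a_elt N i g) (Iall N k M i)) | g. a_ok N seg g}"

inductive_set alg_Zi :: "nat \<Rightarrow> nat \<Rightarrow> (nat \<Rightarrow> nat) \<Rightarrow> (nat \<Rightarrow> nat) \<Rightarrow> nat \<Rightarrow> elt set"
  for N k seg M i where
  zero: "{} \<in> alg_Zi N k seg M i"
| gen: "x \<in> gens_Zi N k seg M i \<Longrightarrow> x \<in> alg_Zi N k seg M i"
| plus: "x \<in> alg_Zi N k seg M i \<Longrightarrow> y \<in> alg_Zi N k seg M i \<Longrightarrow> plusE x y \<in> alg_Zi N k seg M i"
| times: "x \<in> alg_Zi N k seg M i \<Longrightarrow> y \<in> alg_Zi N k seg M i \<Longrightarrow> timesE x y \<in> alg_Zi N k seg M i"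

text \<open>A(Z) = direct sum of the A(Z,i), i = 0..k (all finite sums of their elements).\<close>
inductive_set alg_Z :: "nat \<Rightarrow> nat \<Rightarrow> (nat \<Rightarrow> nat) \<Rightarrow> (nat \<Rightarrow> nat) \<Rightarrow> elt set"
  for N k seg M where
  zero: "{} \<in> alg_Z N k seg M"
| comp: "i \<le> k \<Longrightarrow> x \<in> alg_Zi N k seg M i \<Longrightarrow> x \<in> alg_Z N k seg M"
| plus: "x \<in> alg_Z N k seg M \<Longrightarrow> y \<in> alg_Z N k seg M \<Longrightarrow> plusE x y \<in> alg_Z N k seg M"

text \<open>The arc diagram V_n: 2n-2 points, n segments, n-1 arcs.
  a_1 in Z_1, a_{2i}, a_{2i+1} in Z_{i+1} (1 \<le> i \<le> n-2), a_{2n-2} in Z_n;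
  M(a_{2i-1}) = M(a_{2i}) = i.\<close>
definition V_seg :: "nat \<Rightarrow> nat" where
  "V_seg p = p div 2 + 1"

definition V_match :: "nat \<Rightarrow> nat" where
  "V_match p = (p + 1) div 2"

end

theory Submission
  imports Defs
begin

(* For an arbitrary arc diagram, every basis generator occurring in an
   element of A(Z) has all its strands going upward (a <= b) inside one segment:
   this property holds for the idempotents I(s) and for the elements a_i(S,T,psi),
   it is preserved by composing generators, and hence by sums and products of
   elements; so it holds throughout the inductively generated algebra.
   In V_n every segment contains at most two consecutive points (seg p = p div 2 + 1),
   so such a strand moves up by at most one step.  Two strands moving by at most one
   step can never cross, i.e. the generators have no inversions, and the differential,
   being a sum over inversions, vanishes on each of them and therefore on A(V_n). *)

lemma sumF_mem: assumes "c \<in> sumF f A" shows "\<exists>a\<in>A. c \<in> f a"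
proof -
  have "odd (card {a\<in>A. c \<in> f a})" using assms by (simp add: sumF_def)
  hence "{a\<in>A. c \<in> f a} \<noteq> {}" by (metis card.empty even_zero)
  thus ?thesis by blast
qed

lemma sumF_zero: assumes "\<And>a. a \<in> A \<Longrightarrow> f a = {}" shows "sumF f A = {}"
  using sumF_mem assms by (metis empty_iff subsetI subset_empty)

definition supported :: "(gen \<Rightarrow> bool) \<Rightarrow> elt \<Rightarrow> bool" where
  "supported P x \<longleftrightarrow> (\<forall>g\<in>x. P g)"

lemma supported_sumF:
  "(\<And>a. a \<in> A \<Longrightarrow> supported P (f a)) \<Longrightarrow> supported P (sumF f A)"
  unfolding supported_def using sumF_mem by metis

lemma supported_plus: "supported P x \<Longrightarrow> supported P y \<Longrightarrow> supported P (plusE x y)"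
  unfolding supported_def plusE_def by blast

lemma supported_times:
  assumes comp: "\<And>g h. P g \<Longrightarrow> P h \<Longrightarrow> P (g O h)"
    and "supported P x" "supported P y"
  shows "supported P (timesE x y)"
  unfolding timesE_def
proof (rule supported_sumF)
  fix gh assume "gh \<in> x \<times> y"
  then obtain g h where "gh = (g, h)" "P g" "P h"
    using assms(2,3) unfolding supported_def by blast
  thus "supported P (case gh of (g, h) \<Rightarrow> mult_gen g h)"
    using comp by (simp add: mult_gen_def supported_def)
qed

definition upward_in :: "(nat \<Rightarrow> nat) \<Rightarrow> gen \<Rightarrow> bool" where
  "upward_in seg g \<longleftrightarrow> (\<forall>(a,b)\<in>g. a \<le> b \<and> seg a = seg b)"

lemma upward_in_comp: "upward_in seg g \<Longrightarrow> upward_in seg h \<Longrightarrow> upward_in seg (g O h)"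
  unfolding upward_in_def by fastforce

lemma upward_in_Iset: "supported (upward_in seg) (Iset N M s)"
  unfolding Iset_def
  by (rule supported_sumF) (auto simp: supported_def upward_in_def)

lemma upward_in_Iall: "supported (upward_in seg) (Iall N k M i)"
  unfolding Iall_def by (rule supported_sumF) (rule upward_in_Iset)

lemma upward_in_a_elt:
  assumes "a_ok N seg g" shows "supported (upward_in seg) (a_elt N i g)"
proof -
  have "upward_in seg (g \<union> Id_on U)" for U
    using assms unfolding a_ok_def upward_in_def by (auto simp: Id_on_def)
  thus ?thesis unfolding a_elt_def
    by (intro supported_sumF) (simp add: supported_def)
qed

lemma upward_in_gens:
  assumes "x \<in> gens_Zi N k seg M i" shows "supported (upward_in seg) x"
  using assms unfolding gens_Zi_def
  by (auto intro!: supported_times upward_in_comp upward_in_Iset upward_in_Iall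
                   upward_in_a_elt)

lemma upward_in_alg_Zi:
  "x \<in> alg_Zi N k seg M i \<Longrightarrow> supported (upward_in seg) x"
  by (induction rule: alg_Zi.induct)
     (auto simp: supported_def[of _ "{}"]
           intro: upward_in_gens supported_plus supported_times upward_in_comp)

lemma upward_in_alg_Z:
  "x \<in> alg_Z N k seg M \<Longrightarrow> supported (upward_in seg) x"
  by (induction rule: alg_Z.induct)
     (auto simp: supported_def[of _ "{}"] intro: upward_in_alg_Zi supported_plus)

abbreviation inversions :: "gen \<Rightarrow> ((nat \<times> nat) \<times> (nat \<times> nat)) set" where
  "inversions g \<equiv> {(p,q). p \<in> g \<and> q \<in> g \<and> fst p < fst q \<and> snd p > snd q}"

lemma no_inversions:
  assumes short: "\<And>a b. a \<le> b \<Longrightarrow> seg a = seg b \<Longrightarrow> b \<le> Suc a"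
    and "upward_in seg g"
  shows "inversions g = {}"
proof (rule ccontr)
  assume "inversions g \<noteq> {}"
  then obtain a b c d where ab: "(a,b) \<in> g" and cd: "(c,d) \<in> g" and "a < c" "d < b"
    by auto
  have "a \<le> b" "b \<le> Suc a" "c \<le> d"
    using ab cd assms(2) short unfolding upward_in_def by blast+
  with \<open>a < c\<close> \<open>d < b\<close> show False by linarith
qed

text \<open>The differential of a generator is a sum over its inversions.\<close>
lemma dgen_no_inversions: assumes "inversions g = {}" shows "dgen g = {}"
  unfolding dgen_def assms by (rule sumF_zero) simp

text \<open>Each segment of V_n consists of the points 2i and 2i+1.\<close>
lemma V_seg_short: "a \<le> b \<Longrightarrow> V_seg a = V_seg b \<Longrightarrow> b \<le> Suc a"
  unfolding V_seg_def by linarith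

theorem mainTheorem4:
  fixes n :: nat
  assumes "n \<ge> 2"
  shows "\<forall>x \<in> alg_Z (2*n - 2) (n - 1) V_seg V_match. diff x = {}"
proof
  fix x assume "x \<in> alg_Z (2*n - 2) (n - 1) V_seg V_match"
  hence "supported (upward_in V_seg) x" by (rule upward_in_alg_Z)
  hence "\<forall>g\<in>x. dgen g = {}"
    by (simp add: supported_def dgen_no_inversions no_inversions[OF V_seg_short])
  thus "diff x = {}" unfolding diff_def by (simp add: sumF_zero)
qed

end
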